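(* Let $p,q$ be CFM processes with $p \approx^\oplus q$. If $p$ satisfies DNI, then $q$ satisfies DNI.
   Context: Fix a finite set of actions $Act = H \cup L \cup \{\tau\}$, where $H$ (high-level actions) and $L$ (low-level actions) are disjoint and $\tau$ is the silent action; $\mu$ ranges over $Act$, $h$ over $H$. Fix a finite set of process constants disjoint from $Act$. CFM terms: guarded $s ::= \mathbf{0} \mid \mu.q \mid s+s$; sequential $q ::= s \mid C$; parallel $p ::= q \mid p \,|\, p$. A CFM process is a term all of whose constants have a defining equation $C \doteq s$ with $s$ guarded. LTS rules: $\mu.p \xrightarrow{\mu} p$; if $p \xrightarrow{\mu} p'$ and $C \doteq p$ then $C \xrightarrow{\mu} p'$; if $p \xrightarrow{\mu} p'$ then $p+q \xrightarrow{\mu} p'$ and $q+p \xrightarrow{\mu} p'$; if $p \xrightarrow{\mu} p'$ then $p\,|\,q \xrightarrow{\mu} p'\,|\,q$ and $q\,|\,p \xrightarrow{\mu} q\,|\,p'$. Reachability is in this LTS. An FSM is $N=(S,A,T)$ with finite places $S$, finite labels $A\ni\tau$, and $T \subseteq S \times A \times (S \cup \{\theta\})$ ($\theta$ the empty multiset). Markings are finite multisets over $S$; a transition $(s,\ell,m)$ is enabled at $m_1$ if $s\in m_1$ and firing gives $m_1 \xrightarrow{\ell} (m_1\ominus s)\oplus m$. Net semantics: places are sequential CFM processes other than $\mathbf{0}$; $\mathrm{dec}(\mathbf{0})=\theta$, $\mathrm{dec}(\mu.p)=\{\mu.p\}$, $\mathrm{dec}(p+p')=\{p+p'\}$, $\mathrm{dec}(C)=\{C\}$,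 $\mathrm{dec}(p\,|\,p')=\mathrm{dec}(p)\oplus\mathrm{dec}(p')$. The net $[\![p]\!]$ has initial marking $\mathrm{dec}(p)$, all places and transitions reachable from it, and transitions $(s,\mu,\mathrm{dec}(s'))$ for reachable places $s$ with $s\xrightarrow{\mu}s'$ in the LTS. The net $[\![p\setminus H]\!]$ is obtained by renaming each place $s$ as $s\setminus H$, removing transitions labelled in $H$, and taking initial marking $\mathrm{dec}(p)\setminus H$ (elementwise renaming; similarly $m\setminus H$ for any marking $m$). Branching bisimilarity $\approx$ on places of an FSM: $s\Rightarrow^\epsilon m$ is the reflexive-transitive closure of $\tau$-steps. $R\subseteq S\times S$ is a branching bisimulation if whenever $(s_1,s_2)\in R$ and $s_1\xrightarrow{\ell}m_1$: either $\ell=\tau$ and $\exists m_2$, $s_2\Rightarrow^\epsilon m_2$ with $(s_1,m_2),(m_1,m_2)\in R$; or $\exists s,m_2$ with $s_2\Rightarrow^\epsilon s\xrightarrow{\ell}m_2$, $(s_1,s)\in R$ and either $m_1=\theta=m_2$ or $(m_1,m_2)\in R$; and symmetrically. $\approx$ is the union of all branching bisimulations. The additive closure $R^\oplus$ is the least marking relation with $(\theta,\theta)\in R^\oplus$ and closed under $(s_1,s_2)\in R,(m_1,m_2)\in R^\oplus \Rightarrow (s_1\oplus m_1,s_2\oplus m_2)\in R^\oplus$. Branching team equivalence is $\approx^\oplus$; for processes, $p\approx^\oplus q$ iff $\mathrm{dec}(p)\approx^\oplus\mathrm{dec}(q)$ in the union of the nets $[\![p]\!]$ and $[\![q]\!]$,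 and $p'\setminus H\approx^\oplus p''\setminus H$ iff $\mathrm{dec}(p')\setminus H\approx^\oplus\mathrm{dec}(p'')\setminus H$ in the union of their restricted nets. DNI: a CFM process $p$ satisfies DNI if for all $p',p''$ reachable from $p$ and $h\in H$ with $p'\xrightarrow{h}p''$, $p'\setminus H\approx^\oplus p''\setminus H$; equivalently, for all markings $m_1,m_2$ reachable from $\mathrm{dec}(p)$ in $[\![p]\!]$ and $h\in H$ with $m_1\xrightarrow{h}m_2$, $m_1\setminus H \approx^\oplus m_2\setminus H$ in $[\![p\setminus H]\!]$. *)

theory Defs
  imports Main "HOL-Library.Multiset"
begin

text \<open>Finiteness of Act and of the set of constants is imposed via the sort finite in the theorem.\<close>

datatype 'a act = Tau | Vis 'a

definition is_high :: "'a set \<Rightarrow> 'a act \<Rightarrow> bool" where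
  "is_high H \<mu> \<longleftrightarrow> (\<exists>h\<in>H. \<mu> = Vis h)"

datatype ('a, 'c) cfm =
    CNil
  | Pre "'a act" "('a, 'c) cfm"
  | Sum "('a, 'c) cfm" "('a, 'c) cfm"
  | Cst 'c
  | Par "('a, 'c) cfm" "('a, 'c) cfm"

inductive guarded :: "('a, 'c) cfm \<Rightarrow> bool"
  and sequential :: "('a, 'c) cfm \<Rightarrow> bool" where
  g_nil: "guarded CNil"
| g_pre: "sequential q \<Longrightarrow> guarded (Pre \<mu> q)"
| g_sum: "guarded s1 \<Longrightarrow> guarded s2 \<Longrightarrow> guarded (Sum s1 s2)"
| s_guarded: "guarded s \<Longrightarrow> sequential s"
| s_cst: "sequential (Cst C)"

inductive parallel :: "('a, 'c) cfm \<Rightarrow> bool" where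
  p_seq: "sequential q \<Longrightarrow> parallel q"
| p_par: "parallel p1 \<Longrightarrow> parallel p2 \<Longrightarrow> parallel (Par p1 p2)"

text \<open>A defining environment gives each constant C its body (C \<doteq> Delta C); it is well formed
  if every body is a guarded term. A CFM process (w.r.t. a well formed environment) is a
  parallel term.\<close>

definition wf_env :: "('c \<Rightarrow> ('a, 'c) cfm) \<Rightarrow> bool" where
  "wf_env \<Delta> \<longleftrightarrow> (\<forall>C. guarded (\<Delta> C))"

definition cfm_process :: "('c \<Rightarrow> ('a, 'c) cfm) \<Rightarrow> ('a, 'c) cfm \<Rightarrow> bool" where
  "cfm_process \<Delta> p \<longleftrightarrow> wf_env \<Delta> \<and> parallel p"

inductive step :: "('c \<Rightarrow> ('a, 'c) cfm) \<Rightarrow> ('a, 'c) cfm \<Rightarrow> 'a act \<Rightarrow> ('a, 'c) cfm \<Rightarrow> bool"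
  for \<Delta> where
  st_pre: "step \<Delta> (Pre \<mu> p) \<mu> p"
| st_cst: "step \<Delta> (\<Delta> C) \<mu> p' \<Longrightarrow> step \<Delta> (Cst C) \<mu> p'"
| st_suml: "step \<Delta> p \<mu> p' \<Longrightarrow> step \<Delta> (Sum p q) \<mu> p'"
| st_sumr: "step \<Delta> p \<mu> p' \<Longrightarrow> step \<Delta> (Sum q p) \<mu> p'"
| st_parl: "step \<Delta> p \<mu> p' \<Longrightarrow> step \<Delta> (Par p q) \<mu> (Par p' q)"
| st_parr: "step \<Delta> p \<mu> p' \<Longrightarrow> step \<Delta> (Par q p) \<mu> (Par q p')"

inductive reach :: "('c \<Rightarrow> ('a, 'c) cfm) \<Rightarrow> ('a, 'c) cfm \<Rightarrow> ('a, 'c) cfm \<Rightarrow> bool"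
  for \<Delta> where
  reach_refl: "reach \<Delta> p p"
| reach_step: "reach \<Delta> p p' \<Longrightarrow> step \<Delta> p' \<mu> p'' \<Longrightarrow> reach \<Delta> p p''"

text \<open>An FSM is given by a set of places S and a set of transitions T; a transition is
  (s, l, m) where m is either the empty multiset (theta) or a singleton multiset.
  The label tau is passed explicitly.\<close>

inductive tau_star :: "'l \<Rightarrow> ('s \<times> 'l \<times> 's multiset) set \<Rightarrow> 's multiset \<Rightarrow> 's multiset \<Rightarrow> bool"
  for tau T where
  ts_refl: "tau_star tau T m m"
| ts_step: "(s, tau, m') \<in> T \<Longrightarrow> tau_star tau T m' m'' \<Longrightarrow> tau_star tau T {#s#} m''"

definition bb_clause :: "'l \<Rightarrow> ('s \<times> 'l \<times> 's multiset) set \<Rightarrow> ('s \<times> 's) set \<Rightarrow> 's \<Rightarrow> 's \<Rightarrow> bool" where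
  "bb_clause tau T R s1 s2 \<longleftrightarrow>
     (\<forall>l m1. (s1, l, m1) \<in> T \<longrightarrow>
        (l = tau \<and> (\<exists>m2. tau_star tau T {#s2#} {#m2#} \<and> (s1, m2) \<in> R
                         \<and> (\<exists>m1'. m1 = {#m1'#} \<and> (m1', m2) \<in> R)))
      \<or> (\<exists>s m2. tau_star tau T {#s2#} {#s#} \<and> (s, l, m2) \<in> T \<and> (s1, s) \<in> R
                 \<and> ((m1 = {#} \<and> m2 = {#}) \<or>
                    (\<exists>m1' m2'. m1 = {#m1'#} \<and> m2 = {#m2'#} \<and> (m1', m2') \<in> R))))"

definition branching_bisimulation ::
  "'l \<Rightarrow> 's set \<Rightarrow> ('s \<times> 'l \<times> 's multiset) set \<Rightarrow> ('s \<times> 's) set \<Rightarrow> bool" where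
  "branching_bisimulation tau S T R \<longleftrightarrow>
     R \<subseteq> S \<times> S \<and>
     (\<forall>s1 s2. (s1, s2) \<in> R \<longrightarrow> bb_clause tau T R s1 s2 \<and> bb_clause tau T (R\<inverse>) s2 s1)"

definition branching_bisimilarity ::
  "'l \<Rightarrow> 's set \<Rightarrow> ('s \<times> 'l \<times> 's multiset) set \<Rightarrow> ('s \<times> 's) set" where
  "branching_bisimilarity tau S T = \<Union>{R. branching_bisimulation tau S T R}"

inductive_set additive_closure :: "('s \<times> 's) set \<Rightarrow> ('s multiset \<times> 's multiset) set"
  for R where
  ac_empty: "({#}, {#}) \<in> additive_closure R"
| ac_add: "(s1, s2) \<in> R \<Longrightarrow> (m1, m2) \<in> additive_closure R \<Longrightarrow>
           (add_mset s1 m1, add_mset s2 m2) \<in> additive_closure R"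

definition team_equiv ::
  "'l \<Rightarrow> 's set \<Rightarrow> ('s \<times> 'l \<times> 's multiset) set \<Rightarrow> 's multiset \<Rightarrow> 's multiset \<Rightarrow> bool" where
  "team_equiv tau S T m1 m2 \<longleftrightarrow> (m1, m2) \<in> additive_closure (branching_bisimilarity tau S T)"

fun dec :: "('a, 'c) cfm \<Rightarrow> ('a, 'c) cfm multiset" where
  "dec CNil = {#}"
| "dec (Pre \<mu> p) = {#Pre \<mu> p#}"
| "dec (Sum p p') = {#Sum p p'#}"
| "dec (Cst C) = {#Cst C#}"
| "dec (Par p p') = dec p + dec p'"

inductive_set net_places :: "('c \<Rightarrow> ('a, 'c) cfm) \<Rightarrow> ('a, 'c) cfm \<Rightarrow> ('a, 'c) cfm set"
  for \<Delta> p where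
  np_init: "s \<in># dec p \<Longrightarrow> s \<in> net_places \<Delta> p"
| np_step: "s \<in> net_places \<Delta> p \<Longrightarrow> step \<Delta> s \<mu> s' \<Longrightarrow> s'' \<in># dec s' \<Longrightarrow> s'' \<in> net_places \<Delta> p"

definition net_trans ::
  "('c \<Rightarrow> ('a, 'c) cfm) \<Rightarrow> ('a, 'c) cfm \<Rightarrow> (('a, 'c) cfm \<times> 'a act \<times> ('a, 'c) cfm multiset) set" where
  "net_trans \<Delta> p = {(s, \<mu>, dec s') | s \<mu> s'. s \<in> net_places \<Delta> p \<and> step \<Delta> s \<mu> s'}"

text \<open>Restricted net: each place s is renamed into s\H (written Restr s), and transitions
  labelled by high actions are removed.\<close>

datatype 'x restr = Restr 'x

definition restr_places :: "'x set \<Rightarrow> 'x restr set" where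
  "restr_places S = Restr ` S"

definition restr_trans :: "'a set \<Rightarrow> ('x \<times> 'a act \<times> 'x multiset) set \<Rightarrow>
    ('x restr \<times> 'a act \<times> 'x restr multiset) set" where
  "restr_trans H T = {(Restr s, \<mu>, image_mset Restr m) | s \<mu> m. (s, \<mu>, m) \<in> T \<and> \<not> is_high H \<mu>}"

definition proc_team_equiv :: "('c \<Rightarrow> ('a, 'c) cfm) \<Rightarrow> ('a, 'c) cfm \<Rightarrow> ('a, 'c) cfm \<Rightarrow> bool" where
  "proc_team_equiv \<Delta> p q \<longleftrightarrow>
     team_equiv Tau (net_places \<Delta> p \<union> net_places \<Delta> q) (net_trans \<Delta> p \<union> net_trans \<Delta> q)
       (dec p) (dec q)"

definition restr_team_equiv ::
  "('c \<Rightarrow> ('a, 'c) cfm) \<Rightarrow> 'a set \<Rightarrow> ('a, 'c) cfm \<Rightarrow> ('a, 'c) cfm \<Rightarrow> bool" where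
  "restr_team_equiv \<Delta> H p' p'' \<longleftrightarrow>
     team_equiv Tau
       (restr_places (net_places \<Delta> p') \<union> restr_places (net_places \<Delta> p''))
       (restr_trans H (net_trans \<Delta> p') \<union> restr_trans H (net_trans \<Delta> p''))
       (image_mset Restr (dec p')) (image_mset Restr (dec p''))"

definition DNI :: "('c \<Rightarrow> ('a, 'c) cfm) \<Rightarrow> 'a set \<Rightarrow> ('a, 'c) cfm \<Rightarrow> bool" where
  "DNI \<Delta> H p \<longleftrightarrow>
     (\<forall>p' p'' h. reach \<Delta> p p' \<and> reach \<Delta> p p'' \<and> h \<in> H \<and> step \<Delta> p' (Vis h) p''
        \<longrightarrow> restr_team_equiv \<Delta> H p' p'')"

end

theory Submission
  imports Defs
begin

(* Every net [[p]] is a closed subnet of the net of all CFM terms, so branching bisimilarity and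
   team equivalence may be computed in that single net, with or without the restriction to
   low actions. As the additive closure of an equivalence cancels common summands, DNI of p
   yields a property of single places: every high transition s -h-> m of a place of [[p]] has
   m = {x} with s\H ~ x\H. If dec p and dec q are team equivalent, every place of [[q]] is
   bisimilar to a place of [[p]], so a high transition of a place t of [[q]] is answered, after
   tau-steps, by a high transition of a place of [[p]]; chaining bisimilarities transfers the
   local property to t, and the local property of all places of [[q]] gives DNI for q. *)

subsection \<open>Branching bisimulation on an arbitrary transition set\<close>

lemma tau_star_singleton_source: "tau_star tau T m m' \<Longrightarrow> m' = m \<or> (\<exists>s. m = {#s#})"
  by (induction rule: tau_star.induct) auto

lemma tau_star_trans: "tau_star tau T m1 m2 \<Longrightarrow> tau_star tau T m2 m3 \<Longrightarrow> tau_star tau T m1 m3"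
  by (induction rule: tau_star.induct) (auto intro: tau_star.intros)

lemma tau_star_mono: "tau_star tau T m m' \<Longrightarrow> T \<subseteq> T' \<Longrightarrow> tau_star tau T' m m'"
  by (induction rule: tau_star.induct) (auto intro: tau_star.intros)

lemma tau_star_snoc: "tau_star tau T m {#s#} \<Longrightarrow> (s, tau, m') \<in> T \<Longrightarrow> tau_star tau T m m'"
  by (blast intro: tau_star_trans tau_star.intros)

definition bb_answer ::
  "'l \<Rightarrow> ('s \<times> 'l \<times> 's multiset) set \<Rightarrow> ('s \<times> 's) set \<Rightarrow> 's \<Rightarrow> 's \<Rightarrow> 'l \<Rightarrow> 's multiset \<Rightarrow> bool" where
  "bb_answer tau T R s1 s2 l m1 \<longleftrightarrow>
     (l = tau \<and> (\<exists>m2. tau_star tau T {#s2#} {#m2#} \<and> (s1, m2) \<in> R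
                      \<and> (\<exists>m1'. m1 = {#m1'#} \<and> (m1', m2) \<in> R)))
   \<or> (\<exists>s m2. tau_star tau T {#s2#} {#s#} \<and> (s, l, m2) \<in> T \<and> (s1, s) \<in> R
              \<and> ((m1 = {#} \<and> m2 = {#}) \<or>
                 (\<exists>m1' m2'. m1 = {#m1'#} \<and> m2 = {#m2'#} \<and> (m1', m2') \<in> R)))"

lemma bb_clause_iff:
  "bb_clause tau T R s1 s2 \<longleftrightarrow> (\<forall>l m1. (s1, l, m1) \<in> T \<longrightarrow> bb_answer tau T R s1 s2 l m1)"
  unfolding bb_clause_def bb_answer_def ..

lemma bb_clauseD: "bb_clause tau T R s1 s2 \<Longrightarrow> (s1, l, m1) \<in> T \<Longrightarrow> bb_answer tau T R s1 s2 l m1"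
  by (simp add: bb_clause_iff)

lemma bb_answer_stutter:
  "tau_star tau T {#s2#} {#s2'#} \<Longrightarrow> (s1, s2') \<in> R \<Longrightarrow> (s1', s2') \<in> R
   \<Longrightarrow> bb_answer tau T R s1 s2 tau {#s1'#}"
  unfolding bb_answer_def by blast

lemma bb_answer_empty:
  "tau_star tau T {#s2#} {#s#} \<Longrightarrow> (s, l, {#}) \<in> T \<Longrightarrow> (s1, s) \<in> R
   \<Longrightarrow> bb_answer tau T R s1 s2 l {#}"
  unfolding bb_answer_def by blast

lemma bb_answer_single:
  "tau_star tau T {#s2#} {#s#} \<Longrightarrow> (s, l, {#s'#}) \<in> T \<Longrightarrow> (s1, s) \<in> R \<Longrightarrow> (s1', s') \<in> R
   \<Longrightarrow> bb_answer tau T R s1 s2 l {#s1'#}"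
  unfolding bb_answer_def by blast

lemma bb_answerE:
  assumes "bb_answer tau T R s1 s2 l m1"
  obtains (stutter) s2' s1' where "l = tau" "tau_star tau T {#s2#} {#s2'#}" "(s1, s2') \<in> R"
      "m1 = {#s1'#}" "(s1', s2') \<in> R"
  | (empty) s where "tau_star tau T {#s2#} {#s#}" "(s, l, {#}) \<in> T" "(s1, s) \<in> R" "m1 = {#}"
  | (single) s s' s1' where "tau_star tau T {#s2#} {#s#}" "(s, l, {#s'#}) \<in> T" "(s1, s) \<in> R"
      "m1 = {#s1'#}" "(s1', s') \<in> R"
  using assms unfolding bb_answer_def by (elim disjE exE conjE) auto

lemma bb_answer_mono:
  assumes "bb_answer tau T R s1 s2 l m1" "T \<subseteq> T'" "R \<subseteq> R'"
  shows "bb_answer tau T' R' s1 s2 l m1"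
  using assms(1)
proof (cases rule: bb_answerE)
  case stutter
  then show ?thesis
    using assms(2,3) by (blast intro: bb_answer_stutter tau_star_mono)
next
  case empty
  then show ?thesis
    using assms(2,3) by (blast intro: bb_answer_empty tau_star_mono)
next
  case single
  then show ?thesis
    using assms(2,3) by (blast intro: bb_answer_single tau_star_mono)
qed

lemma bb_clause_mono: "bb_clause tau T R a b \<Longrightarrow> R \<subseteq> R' \<Longrightarrow> bb_clause tau T R' a b"
  by (meson bb_answer_mono bb_clause_iff order_refl)

lemma branching_bisimulationI:
  assumes "R \<subseteq> S \<times> S"
    and "\<And>a b. (a, b) \<in> R \<Longrightarrow> bb_clause tau T R a b"
    and "\<And>a b. (a, b) \<in> R \<Longrightarrow> bb_clause tau T (R\<inverse>) b a"
  shows "branching_bisimulation tau S T R"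
  using assms unfolding branching_bisimulation_def by blast

lemma branching_bisimulationD:
  assumes "branching_bisimulation tau S T R" "(a, b) \<in> R"
  shows "a \<in> S" "b \<in> S" "bb_clause tau T R a b" "bb_clause tau T (R\<inverse>) b a"
  using assms unfolding branching_bisimulation_def by auto

definition branching_simulation :: "'l \<Rightarrow> ('s \<times> 'l \<times> 's multiset) set \<Rightarrow> ('s \<times> 's) set \<Rightarrow> bool" where
  "branching_simulation tau T R \<longleftrightarrow> (\<forall>(a, b) \<in> R. bb_clause tau T R a b)"

lemma branching_simulationD: "branching_simulation tau T R \<Longrightarrow> (a, b) \<in> R \<Longrightarrow> bb_clause tau T R a b"
  unfolding branching_simulation_def by blast

lemma branching_bisimulation_UNIV_iff:
  "branching_bisimulation tau UNIV T R \<longleftrightarrow>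
     branching_simulation tau T R \<and> branching_simulation tau T (R\<inverse>)"
  unfolding branching_bisimulation_def branching_simulation_def by auto

lemma branching_simulation_tau_star:
  assumes "branching_simulation tau T R" "tau_star tau T {#p#} {#p'#}" "(p, q) \<in> R"
  shows "\<exists>q'. tau_star tau T {#q#} {#q'#} \<and> (p', q') \<in> R"
proof -
  have "\<exists>q'. tau_star tau T {#q#} {#q'#} \<and> (p', q') \<in> R"
    if "tau_star tau T m m'" "m = {#p#}" "m' = {#p'#}" "(p, q) \<in> R" for m m' p q
    using that
  proof (induction arbitrary: p q rule: tau_star.induct)
    case ts_refl
    then show ?case by (auto intro: tau_star.ts_refl)
  next
    case (ts_step s x m'')
    obtain x' where x': "x = {#x'#}"
      using tau_star_singleton_source[OF ts_step.hyps(2)] ts_step.prems(2) by auto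
    have "bb_answer tau T R p q tau {#x'#}"
      using branching_simulationD[OF assms(1) ts_step.prems(3)] ts_step.hyps(1) ts_step.prems(1) x'
      by (simp add: bb_clause_iff)
    then have "\<exists>y. tau_star tau T {#q#} {#y#} \<and> (x', y) \<in> R"
    proof (cases rule: bb_answerE)
      case (stutter q')
      then show ?thesis by auto
    next
      case (single q0 q')
      then show ?thesis by (auto intro: tau_star_snoc)
    qed simp
    then show ?case
      using ts_step.IH[OF x' ts_step.prems(2)] by (blast intro: tau_star_trans)
  qed
  then show ?thesis using assms(2,3) by blast
qed

lemma bb_clause_relcomp:
  assumes "bb_clause tau T R1 p q" "branching_simulation tau T R2" "(q, r) \<in> R2"
  shows "bb_clause tau T (R1 O R2) p r"
  unfolding bb_clause_iff
proof (intro allI impI)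
  fix l m1
  assume "(p, l, m1) \<in> T"
  with assms(1) have "bb_answer tau T R1 p q l m1" by (rule bb_clauseD)
  then show "bb_answer tau T (R1 O R2) p r l m1"
  proof (cases rule: bb_answerE)
    case (stutter q' p')
    obtain r' where "tau_star tau T {#r#} {#r'#}" "(q', r') \<in> R2"
      using branching_simulation_tau_star[OF assms(2) stutter(2) assms(3)] by blast
    then show ?thesis
      using stutter by (blast intro: bb_answer_stutter)
  next
    case (empty q0)
    obtain r0 where r0: "tau_star tau T {#r#} {#r0#}" "(q0, r0) \<in> R2"
      using branching_simulation_tau_star[OF assms(2) empty(1) assms(3)] by blast
    have "bb_answer tau T R2 q0 r0 l {#}"
      using branching_simulationD[OF assms(2) r0(2)] empty(2) by (rule bb_clauseD)
    then show ?thesis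
    proof (cases rule: bb_answerE)
      case (empty r1)
      then show ?thesis
        using \<open>m1 = {#}\<close> \<open>(p, q0) \<in> R1\<close> r0(1)
        by (blast intro: bb_answer_empty tau_star_trans)
    qed simp_all
  next
    case (single q0 q1 p')
    obtain r0 where r0: "tau_star tau T {#r#} {#r0#}" "(q0, r0) \<in> R2"
      using branching_simulation_tau_star[OF assms(2) single(1) assms(3)] by blast
    have "bb_answer tau T R2 q0 r0 l {#q1#}"
      using branching_simulationD[OF assms(2) r0(2)] single(2) by (rule bb_clauseD)
    then show ?thesis
    proof (cases rule: bb_answerE)
      case (stutter r1)
      then show ?thesis
        using single r0(1) by (blast intro: bb_answer_stutter tau_star_trans)
    next
      case (single r1 r2)
      then show ?thesis
        using \<open>m1 = {#p'#}\<close> \<open>(p, q0) \<in> R1\<close> \<open>(p', q1) \<in> R1\<close> r0(1)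
        by (blast intro: bb_answer_single tau_star_trans)
    qed simp
  qed
qed

lemma branching_simulation_relcomp:
  assumes "branching_simulation tau T R1" "branching_simulation tau T R2"
  shows "branching_simulation tau T (R1 O R2)"
  unfolding branching_simulation_def
proof clarify
  fix a b c
  assume "(a, b) \<in> R1" "(b, c) \<in> R2"
  then show "bb_clause tau T (R1 O R2) a c"
    by (rule bb_clause_relcomp[OF branching_simulationD[OF assms(1)] assms(2)])
qed

lemma branching_bisimulation_relcomp:
  "branching_bisimulation tau UNIV T R1 \<Longrightarrow> branching_bisimulation tau UNIV T R2
   \<Longrightarrow> branching_bisimulation tau UNIV T (R1 O R2)"
  by (simp add: branching_bisimulation_UNIV_iff converse_relcomp branching_simulation_relcomp)

lemma branching_bisimulation_converse:
  "branching_bisimulation tau UNIV T R \<Longrightarrow> branching_bisimulation tau UNIV T (R\<inverse>)"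
  by (simp add: branching_bisimulation_UNIV_iff)

lemma branching_bisimulation_le_bisimilarity:
  "branching_bisimulation tau S T R \<Longrightarrow> R \<subseteq> branching_bisimilarity tau S T"
  unfolding branching_bisimilarity_def by blast

lemma branching_bisimulation_bisimilarity:
  "branching_bisimulation tau UNIV T (branching_bisimilarity tau UNIV T)"
  (is "branching_bisimulation tau UNIV T ?B")
proof (rule branching_bisimulationI)
  fix a b
  assume "(a, b) \<in> ?B"
  then obtain R where R: "branching_bisimulation tau UNIV T R" "(a, b) \<in> R"
    unfolding branching_bisimilarity_def by blast
  have le: "R \<subseteq> ?B" "R\<inverse> \<subseteq> ?B\<inverse>"
    using branching_bisimulation_le_bisimilarity[OF R(1)] by auto
  show "bb_clause tau T ?B a b"
    by (rule bb_clause_mono[OF branching_bisimulationD(3)[OF R] le(1)])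
  show "bb_clause tau T (?B\<inverse>) b a"
    by (rule bb_clause_mono[OF branching_bisimulationD(4)[OF R] le(2)])
qed simp

lemma sym_branching_bisimilarity: "sym (branching_bisimilarity tau UNIV T)"
  by (rule symI, rule subsetD[OF branching_bisimulation_le_bisimilarity[OF
        branching_bisimulation_converse[OF branching_bisimulation_bisimilarity]]])
    (rule converseI)

lemma trans_branching_bisimilarity: "trans (branching_bisimilarity tau UNIV T)"
  by (rule transI, rule subsetD[OF branching_bisimulation_le_bisimilarity[OF branching_bisimulation_relcomp[OF
        branching_bisimulation_bisimilarity branching_bisimulation_bisimilarity]]])
    (rule relcompI)

subsection \<open>Additive closure\<close>

lemma additive_closure_mono_strong:
  "(m1, m2) \<in> additive_closure R
   \<Longrightarrow> (\<And>x y. x \<in># m1 \<Longrightarrow> y \<in># m2 \<Longrightarrow> (x, y) \<in> R \<Longrightarrow> (x, y) \<in> R')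
   \<Longrightarrow> (m1, m2) \<in> additive_closure R'"
  by (induction rule: additive_closure.induct) (auto intro: additive_closure.intros)

lemma additive_closure_refl: "(\<And>x. x \<in># m \<Longrightarrow> (x, x) \<in> R) \<Longrightarrow> (m, m) \<in> additive_closure R"
  by (induction m) (auto intro: additive_closure.intros)

lemma additive_closure_size: "(m1, m2) \<in> additive_closure R \<Longrightarrow> size m1 = size m2"
  by (induction rule: additive_closure.induct) auto

lemma additive_closure_related_left:
  "(m1, m2) \<in> additive_closure R \<Longrightarrow> s \<in># m1 \<Longrightarrow> \<exists>t\<in>#m2. (s, t) \<in> R"
  by (induction rule: additive_closure.induct) auto

lemma additive_closure_related_right:
  "(m1, m2) \<in> additive_closure R \<Longrightarrow> t \<in># m2 \<Longrightarrow> \<exists>s\<in>#m1. (s, t) \<in> R"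
  by (induction rule: additive_closure.induct) auto

lemma additive_closure_class_size:
  assumes "(m1, m2) \<in> additive_closure R" "sym R" "trans R"
  shows "size (filter_mset (\<lambda>y. (a, y) \<in> R) m1) = size (filter_mset (\<lambda>y. (a, y) \<in> R) m2)"
  using assms(1)
proof (induction rule: additive_closure.induct)
  case (ac_add s1 s2 m1 m2)
  have "(a, s1) \<in> R \<longleftrightarrow> (a, s2) \<in> R"
    using ac_add.hyps(1) assms(2,3) by (meson symD transD)
  then show ?case
    using ac_add.IH by simp
qed simp

lemma additive_closure_cancel:
  assumes ac: "(add_mset s m, m + n) \<in> additive_closure R" and "sym R" "trans R"
  shows "\<exists>x. n = {#x#} \<and> (s, x) \<in> R"
proof -
  obtain x where n: "n = {#x#}"
    using additive_closure_size[OF ac] size_1_singleton_mset by fastforce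
  obtain t where "(s, t) \<in> R"
    using additive_closure_related_left[OF ac] by auto
  then have "(s, s) \<in> R"
    using assms(2,3) by (meson symD transD)
  \<comment> \<open>the class of s meets the left side once more than m, so it must meet n\<close>
  then have "(s, x) \<in> R"
    using additive_closure_class_size[OF assms, of s] n by (auto split: if_splits)
  with n show ?thesis by blast
qed

subsection \<open>Closed subnets\<close>

definition closed_subnet ::
  "'s set \<Rightarrow> ('s \<times> 'l \<times> 's multiset) set \<Rightarrow> ('s \<times> 'l \<times> 's multiset) set \<Rightarrow> bool" where
  "closed_subnet S T T' \<longleftrightarrow>
     T \<subseteq> T' \<and> (\<forall>s l m. (s, l, m) \<in> T' \<longrightarrow> s \<in> S \<longrightarrow> (s, l, m) \<in> T \<and> set_mset m \<subseteq> S)"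

lemma closed_subnetD:
  assumes "closed_subnet S T T'"
  shows "T \<subseteq> T'" and "(s, l, m) \<in> T' \<Longrightarrow> s \<in> S \<Longrightarrow> (s, l, m) \<in> T"
    and "(s, l, m) \<in> T' \<Longrightarrow> s \<in> S \<Longrightarrow> set_mset m \<subseteq> S"
  using assms unfolding closed_subnet_def by blast+

lemma closed_subnet_Un:
  "closed_subnet S1 T1 T \<Longrightarrow> closed_subnet S2 T2 T \<Longrightarrow> closed_subnet (S1 \<union> S2) (T1 \<union> T2) T"
  unfolding closed_subnet_def by blast

lemma tau_star_closed_subnet:
  "tau_star tau T' m m' \<Longrightarrow> closed_subnet S T T' \<Longrightarrow> set_mset m \<subseteq> S
   \<Longrightarrow> tau_star tau T m m' \<and> set_mset m' \<subseteq> S"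
proof (induction rule: tau_star.induct)
  case (ts_step s m' m'')
  then show ?case
    by (auto intro: tau_star.ts_step dest: closed_subnetD(2,3))
qed (auto intro: tau_star.ts_refl)

lemma bb_clause_closed_subnet_up:
  assumes "closed_subnet S T T'" "a \<in> S" "bb_clause tau T R a b"
  shows "bb_clause tau T' R a b"
  unfolding bb_clause_iff
proof (intro allI impI)
  fix l m1
  assume "(a, l, m1) \<in> T'"
  then have "bb_answer tau T R a b l m1"
    using assms by (blast intro: bb_clauseD closed_subnetD(2))
  then show "bb_answer tau T' R a b l m1"
    using closed_subnetD(1)[OF assms(1)] by (blast intro: bb_answer_mono)
qed

lemma bb_clause_closed_subnet_down:
  assumes sub: "closed_subnet S T T'" and "a \<in> S" "b \<in> S" and "bb_clause tau T' R a b"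
  shows "bb_clause tau T (R \<inter> S \<times> S) a b"
  unfolding bb_clause_iff
proof (intro allI impI)
  fix l m1
  assume "(a, l, m1) \<in> T"
  then have "(a, l, m1) \<in> T'" and m1: "set_mset m1 \<subseteq> S"
    using closed_subnetD[OF sub] \<open>a \<in> S\<close> by blast+
  with assms(4) have "bb_answer tau T' R a b l m1" by (blast intro: bb_clauseD)
  then show "bb_answer tau T (R \<inter> S \<times> S) a b l m1"
  proof (cases rule: bb_answerE)
    case (stutter b')
    with tau_star_closed_subnet[OF stutter(2) sub] \<open>a \<in> S\<close> \<open>b \<in> S\<close> m1 show ?thesis
      by (auto intro: bb_answer_stutter)
  next
    case (empty s)
    with tau_star_closed_subnet[OF empty(1) sub] \<open>a \<in> S\<close> \<open>b \<in> S\<close> show ?thesis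
      by (auto intro: bb_answer_empty dest: closed_subnetD(2)[OF sub])
  next
    case (single s s')
    with tau_star_closed_subnet[OF single(1) sub] \<open>a \<in> S\<close> \<open>b \<in> S\<close> m1 show ?thesis
      by (auto intro!: bb_answer_single dest: closed_subnetD(2,3)[OF sub])
  qed
qed

lemma branching_bisimilarity_closed_subnet:
  assumes sub: "closed_subnet S T T'"
  shows "branching_bisimilarity tau S T = branching_bisimilarity tau UNIV T' \<inter> S \<times> S"
proof
  show "branching_bisimilarity tau S T \<subseteq> branching_bisimilarity tau UNIV T' \<inter> S \<times> S"
  proof
    fix x
    assume "x \<in> branching_bisimilarity tau S T"
    then obtain R where R: "branching_bisimulation tau S T R" "x \<in> R"
      unfolding branching_bisimilarity_def by blast
    have RS: "R \<subseteq> S \<times> S"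
      using branching_bisimulationD(1,2)[OF R(1)] by auto
    have "branching_bisimulation tau UNIV T' R"
    proof (rule branching_bisimulationI)
      fix a b
      assume "(a, b) \<in> R"
      note ab = branching_bisimulationD[OF R(1) this]
      show "bb_clause tau T' R a b"
        by (rule bb_clause_closed_subnet_up[OF sub ab(1,3)])
      show "bb_clause tau T' (R\<inverse>) b a"
        by (rule bb_clause_closed_subnet_up[OF sub ab(2,4)])
    qed simp
    then have "R \<subseteq> branching_bisimilarity tau UNIV T'"
      by (rule branching_bisimulation_le_bisimilarity)
    with R(2) RS show "x \<in> branching_bisimilarity tau UNIV T' \<inter> S \<times> S"
      by blast
  qed
next
  let ?B = "branching_bisimilarity tau UNIV T'"
  have conv: "?B\<inverse> \<inter> S \<times> S = (?B \<inter> S \<times> S)\<inverse>" by auto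
  have "branching_bisimulation tau S T (?B \<inter> S \<times> S)"
  proof (rule branching_bisimulationI)
    fix a b
    assume ab: "(a, b) \<in> ?B \<inter> S \<times> S"
    then have "a \<in> S" "b \<in> S" by auto
    note clauses = branching_bisimulationD(3,4)[OF branching_bisimulation_bisimilarity IntD1[OF ab]]
    show "bb_clause tau T (?B \<inter> S \<times> S) a b"
      by (rule bb_clause_closed_subnet_down[OF sub \<open>a \<in> S\<close> \<open>b \<in> S\<close> clauses(1)])
    show "bb_clause tau T ((?B \<inter> S \<times> S)\<inverse>) b a"
      using bb_clause_closed_subnet_down[OF sub \<open>b \<in> S\<close> \<open>a \<in> S\<close> clauses(2)] by (simp only: conv)
  qed blast
  then show "?B \<inter> S \<times> S \<subseteq> branching_bisimilarity tau S T"
    by (rule branching_bisimulation_le_bisimilarity)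
qed

lemma team_equiv_closed_subnet_iff:
  assumes "closed_subnet S T T'" "set_mset m1 \<subseteq> S" "set_mset m2 \<subseteq> S"
  shows "team_equiv tau S T m1 m2 \<longleftrightarrow> (m1, m2) \<in> additive_closure (branching_bisimilarity tau UNIV T')"
  unfolding team_equiv_def branching_bisimilarity_closed_subnet[OF assms(1)]
proof
  assume "(m1, m2) \<in> additive_closure (branching_bisimilarity tau UNIV T' \<inter> S \<times> S)"
  then show "(m1, m2) \<in> additive_closure (branching_bisimilarity tau UNIV T')"
    by (rule additive_closure_mono_strong) simp
next
  assume "(m1, m2) \<in> additive_closure (branching_bisimilarity tau UNIV T')"
  then show "(m1, m2) \<in> additive_closure (branching_bisimilarity tau UNIV T' \<inter> S \<times> S)"
    by (rule additive_closure_mono_strong) (use assms(2,3) in auto)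
qed

subsection \<open>The net of all CFM terms\<close>

definition cfm_trans :: "('c \<Rightarrow> ('a, 'c) cfm) \<Rightarrow> (('a, 'c) cfm \<times> 'a act \<times> ('a, 'c) cfm multiset) set" where
  "cfm_trans \<Delta> = {(s, \<mu>, dec s') | s \<mu> s'. step \<Delta> s \<mu> s'}"

abbreviation cfm_bisim :: "('c \<Rightarrow> ('a, 'c) cfm) \<Rightarrow> (('a, 'c) cfm \<times> ('a, 'c) cfm) set" where
  "cfm_bisim \<Delta> \<equiv> branching_bisimilarity Tau UNIV (cfm_trans \<Delta>)"

abbreviation restr_bisim ::
  "('c \<Rightarrow> ('a, 'c) cfm) \<Rightarrow> 'a set \<Rightarrow> (('a, 'c) cfm restr \<times> ('a, 'c) cfm restr) set" where
  "restr_bisim \<Delta> H \<equiv> branching_bisimilarity Tau UNIV (restr_trans H (cfm_trans \<Delta>))"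

lemma step_dec_place:
  "step \<Delta> p \<mu> p' \<Longrightarrow> \<exists>s s' m. dec p = add_mset s m \<and> step \<Delta> s \<mu> s' \<and> dec p' = m + dec s'"
proof (induction rule: step.induct)
  case (st_parl p \<mu> p' q)
  then obtain s s' m where "dec p = add_mset s m" "step \<Delta> s \<mu> s'" "dec p' = m + dec s'"
    by blast
  then show ?case
    by (intro exI[of _ s] exI[of _ s'] exI[of _ "m + dec q"]) simp
next
  case (st_parr p \<mu> p' q)
  then obtain s s' m where "dec p = add_mset s m" "step \<Delta> s \<mu> s'" "dec p' = m + dec s'"
    by blast
  then show ?case
    by (intro exI[of _ s] exI[of _ s'] exI[of _ "dec q + m"]) simp
qed (auto intro: step.intros)

lemma step_of_place_step:
  "dec p = add_mset s m \<Longrightarrow> step \<Delta> s \<mu> s' \<Longrightarrow> \<exists>p'. step \<Delta> p \<mu> p' \<and> dec p' = m + dec s'"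
proof (induction p arbitrary: m)
  case (Par p1 p2)
  have "s \<in># dec (Par p1 p2)"
    using Par.prems(1) by simp
  then consider "s \<in># dec p1" | "s \<in># dec p2" by auto
  then show ?case
  proof cases
    case 1
    then obtain m1 where m1: "dec p1 = add_mset s m1"
      by (metis multi_member_split)
    then obtain p1' where "step \<Delta> p1 \<mu> p1'" "dec p1' = m1 + dec s'"
      using Par.IH(1) Par.prems(2) by blast
    moreover have "m = m1 + dec p2"
      using Par.prems(1) m1 by simp
    ultimately show ?thesis by (auto intro: step.st_parl)
  next
    case 2
    then obtain m2 where m2: "dec p2 = add_mset s m2"
      by (metis multi_member_split)
    then obtain p2' where "step \<Delta> p2 \<mu> p2'" "dec p2' = m2 + dec s'"
      using Par.IH(2) Par.prems(2) by blast
    moreover have "m = dec p1 + m2"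
      using Par.prems(1) m2 by simp
    ultimately show ?thesis by (auto intro: step.st_parr)
  qed
qed auto

lemma reach_dec_subset_net_places: "reach \<Delta> p p' \<Longrightarrow> set_mset (dec p') \<subseteq> net_places \<Delta> p"
proof (induction rule: reach.induct)
  case (reach_step p' \<mu> p'')
  then show ?case
    using step_dec_place[OF reach_step.hyps(2)] by (auto intro: net_places.np_step)
qed (auto intro: net_places.np_init)

lemma net_places_reach: "s \<in> net_places \<Delta> p \<Longrightarrow> \<exists>p'. reach \<Delta> p p' \<and> s \<in># dec p'"
proof (induction rule: net_places.induct)
  case (np_init s)
  then show ?case by (auto intro: reach.reach_refl)
next
  case (np_step s \<mu> s' s'')
  then obtain p' m where p': "reach \<Delta> p p'" "dec p' = add_mset s m"
    by (metis multi_member_split)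
  then obtain p'' where "step \<Delta> p' \<mu> p''" "dec p'' = m + dec s'"
    using step_of_place_step np_step.hyps(2) by blast
  then show ?case
    using p'(1) np_step.hyps(3) by (auto intro: reach.reach_step)
qed

lemma closed_subnet_net: "closed_subnet (net_places \<Delta> p) (net_trans \<Delta> p) (cfm_trans \<Delta>)"
  unfolding closed_subnet_def net_trans_def cfm_trans_def by (auto intro: net_places.np_step)

lemma closed_subnet_restr_net:
  "closed_subnet (restr_places (net_places \<Delta> p)) (restr_trans H (net_trans \<Delta> p))
     (restr_trans H (cfm_trans \<Delta>))"
  unfolding closed_subnet_def net_trans_def cfm_trans_def restr_trans_def restr_places_def
  by (fastforce intro: net_places.np_step)

lemma tau_star_restr:
  "tau_star Tau T m m' \<Longrightarrow> tau_star Tau (restr_trans H T) (image_mset Restr m) (image_mset Restr m')"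
proof (induction rule: tau_star.induct)
  case (ts_step s m' m'')
  then have "(Restr s, Tau, image_mset Restr m') \<in> restr_trans H T"
    unfolding restr_trans_def is_high_def by blast
  with ts_step.IH show ?case
    by (auto intro: tau_star.ts_step)
qed (rule tau_star.ts_refl)

lemma bb_clause_restr:
  assumes "bb_clause Tau T R a b"
  shows "bb_clause Tau (restr_trans H T) (map_prod Restr Restr ` R) (Restr a) (Restr b)"
  unfolding bb_clause_iff
proof (intro allI impI)
  let ?R = "map_prod Restr Restr ` R"
  fix l m1
  assume "(Restr a, l, m1) \<in> restr_trans H T"
  then obtain m0 where tr: "(a, l, m0) \<in> T" "m1 = image_mset Restr m0" "\<not> is_high H l"
    unfolding restr_trans_def by auto
  have restr_tr: "(Restr s, l, image_mset Restr m) \<in> restr_trans H T" if "(s, l, m) \<in> T" for s m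
    using that tr(3) unfolding restr_trans_def by blast
  from bb_clauseD[OF assms tr(1)] show "bb_answer Tau (restr_trans H T) ?R (Restr a) (Restr b) l m1"
  proof (cases rule: bb_answerE)
    case (stutter b' a')
    then show ?thesis
      using tr(2) tau_star_restr[OF stutter(2), of H] by (auto intro!: bb_answer_stutter)
  next
    case (empty s)
    then show ?thesis
      using tr(2) tau_star_restr[OF empty(1), of H] restr_tr[OF empty(2)] by (auto intro!: bb_answer_empty)
  next
    case (single s s' a')
    then show ?thesis
      using tr(2) tau_star_restr[OF single(1), of H] restr_tr[OF single(2)] by (auto intro!: bb_answer_single)
  qed
qed

lemma branching_bisimilarity_restr:
  assumes "(a, b) \<in> branching_bisimilarity Tau UNIV T"
  shows "(Restr a, Restr b) \<in> branching_bisimilarity Tau UNIV (restr_trans H T)"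
proof -
  let ?B = "branching_bisimilarity Tau UNIV T"
  have "branching_bisimulation Tau UNIV (restr_trans H T) (map_prod Restr Restr ` ?B)"
  proof (rule branching_bisimulationI)
    fix x y
    assume "(x, y) \<in> map_prod Restr Restr ` ?B"
    then obtain a b where ab: "x = Restr a" "y = Restr b" "(a, b) \<in> ?B" by auto
    note clauses = branching_bisimulationD(3,4)[OF branching_bisimulation_bisimilarity ab(3)]
    have conv: "(map_prod Restr Restr ` ?B)\<inverse> = map_prod Restr Restr ` (?B\<inverse>)" by auto
    show "bb_clause Tau (restr_trans H T) (map_prod Restr Restr ` ?B) x y"
      unfolding ab(1,2) by (rule bb_clause_restr[OF clauses(1)])
    show "bb_clause Tau (restr_trans H T) ((map_prod Restr Restr ` ?B)\<inverse>) y x"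
      unfolding ab(1,2) conv by (rule bb_clause_restr[OF clauses(2)])
  qed simp
  then have "map_prod Restr Restr ` ?B \<subseteq> branching_bisimilarity Tau UNIV (restr_trans H T)"
    by (rule branching_bisimulation_le_bisimilarity)
  with assms show ?thesis by auto
qed

lemma proc_team_equiv_iff:
  "proc_team_equiv \<Delta> p q \<longleftrightarrow> (dec p, dec q) \<in> additive_closure (cfm_bisim \<Delta>)"
  unfolding proc_team_equiv_def
  by (rule team_equiv_closed_subnet_iff[OF closed_subnet_Un[OF closed_subnet_net closed_subnet_net]])
    (auto intro: net_places.np_init)

lemma restr_team_equiv_iff:
  "restr_team_equiv \<Delta> H p q \<longleftrightarrow>
     (image_mset Restr (dec p), image_mset Restr (dec q)) \<in> additive_closure (restr_bisim \<Delta> H)"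
  unfolding restr_team_equiv_def
  by (rule team_equiv_closed_subnet_iff[OF closed_subnet_Un[OF closed_subnet_restr_net closed_subnet_restr_net]])
    (auto simp: restr_places_def intro: net_places.np_init)

subsection \<open>DNI as a property of single places\<close>

lemma DNI_place_step:
  assumes "DNI \<Delta> H p" "s \<in> net_places \<Delta> p" "h \<in> H" "(s, Vis h, m) \<in> cfm_trans \<Delta>"
  shows "\<exists>x. m = {#x#} \<and> (Restr s, Restr x) \<in> restr_bisim \<Delta> H"
proof -
  obtain s' where s': "m = dec s'" "step \<Delta> s (Vis h) s'"
    using assms(4) unfolding cfm_trans_def by blast
  obtain p' rest where p': "reach \<Delta> p p'" "dec p' = add_mset s rest"
    using net_places_reach[OF assms(2)] by (metis multi_member_split)
  obtain p'' where p'': "step \<Delta> p' (Vis h) p''" "dec p'' = rest + m"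
    using step_of_place_step[OF p'(2) s'(2)] s'(1) by blast
  have "restr_team_equiv \<Delta> H p' p''"
    using assms(1,3) p'(1) p''(1) unfolding DNI_def by (blast intro: reach.reach_step)
  then have "(add_mset (Restr s) (image_mset Restr rest), image_mset Restr rest + image_mset Restr m)
      \<in> additive_closure (restr_bisim \<Delta> H)"
    by (simp add: restr_team_equiv_iff p'(2) p''(2))
  then obtain x' where x': "image_mset Restr m = {#x'#}" "(Restr s, x') \<in> restr_bisim \<Delta> H"
    using additive_closure_cancel sym_branching_bisimilarity trans_branching_bisimilarity by metis
  then obtain x where "m = {#x#}" "x' = Restr x"
    using msed_map_invR[of Restr m x' "{#}"] by auto
  with x'(2) show ?thesis by blast
qed

lemma DNI_if_place_steps:
  assumes refl: "\<And>t. t \<in> net_places \<Delta> q \<Longrightarrow> (Restr t, Restr t) \<in> restr_bisim \<Delta> H"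
    and steps: "\<And>t h t'. t \<in> net_places \<Delta> q \<Longrightarrow> h \<in> H \<Longrightarrow> step \<Delta> t (Vis h) t'
      \<Longrightarrow> \<exists>a. dec t' = {#a#} \<and> (Restr t, Restr a) \<in> restr_bisim \<Delta> H"
  shows "DNI \<Delta> H q"
  unfolding DNI_def
proof (intro allI impI, elim conjE)
  fix q' q'' h
  assume q': "reach \<Delta> q q'" and "h \<in> H" "step \<Delta> q' (Vis h) q''"
  obtain t t' rest where t: "dec q' = add_mset t rest" "step \<Delta> t (Vis h) t'" "dec q'' = rest + dec t'"
    using step_dec_place[OF \<open>step \<Delta> q' (Vis h) q''\<close>] by blast
  have places: "set_mset (dec q') \<subseteq> net_places \<Delta> q"
    using q' by (rule reach_dec_subset_net_places)
  obtain a where a: "dec t' = {#a#}" "(Restr t, Restr a) \<in> restr_bisim \<Delta> H"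
    using steps[OF _ \<open>h \<in> H\<close> t(2)] places t(1) by auto
  have "(image_mset Restr rest, image_mset Restr rest) \<in> additive_closure (restr_bisim \<Delta> H)"
    by (rule additive_closure_refl) (use refl places t(1) in auto)
  with a(2) show "restr_team_equiv \<Delta> H q' q''"
    by (simp add: restr_team_equiv_iff t(1,3) a(1) additive_closure.ac_add)
qed

lemma net_places_bisim_cover:
  assumes "(dec p, dec q) \<in> additive_closure (cfm_bisim \<Delta>)" "t \<in> net_places \<Delta> q"
  shows "\<exists>s\<in>net_places \<Delta> p. (s, t) \<in> cfm_bisim \<Delta>"
  using assms(2)
proof (induction rule: net_places.induct)
  case (np_init t)
  then show ?case
    using additive_closure_related_right[OF assms(1)] by (blast intro: net_places.np_init)
next
  case (np_step t \<mu> t' t'')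
  then obtain s where s: "s \<in> net_places \<Delta> p" "(s, t) \<in> cfm_bisim \<Delta>" by blast
  have "(t, \<mu>, dec t') \<in> cfm_trans \<Delta>"
    using np_step.hyps(2) unfolding cfm_trans_def by blast
  with branching_bisimulationD(4)[OF branching_bisimulation_bisimilarity s(2)]
  have "bb_answer Tau (cfm_trans \<Delta>) ((cfm_bisim \<Delta>)\<inverse>) t s \<mu> (dec t')"
    by (rule bb_clauseD)
  then show ?case
  proof (cases rule: bb_answerE)
    case (stutter s' t1)
    then have "s' \<in> net_places \<Delta> p"
      using tau_star_closed_subnet[OF stutter(2) closed_subnet_net] s(1) by simp
    with stutter np_step.hyps(3) show ?thesis by auto
  next
    case (empty s0)
    with np_step.hyps(3) show ?thesis by simp
  next
    case (single s0 s1 t1)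
    then have "s0 \<in> net_places \<Delta> p"
      using tau_star_closed_subnet[OF single(1) closed_subnet_net] s(1) by simp
    then have "s1 \<in> net_places \<Delta> p"
      using closed_subnetD(3)[OF closed_subnet_net single(2)] by simp
    with single np_step.hyps(3) show ?thesis by auto
  qed
qed

lemma DNI_place_step_transfer:
  assumes "DNI \<Delta> H p" "s \<in> net_places \<Delta> p" "(s, t) \<in> cfm_bisim \<Delta>" "h \<in> H" "step \<Delta> t (Vis h) t'"
  shows "\<exists>a. dec t' = {#a#} \<and> (Restr t, Restr a) \<in> restr_bisim \<Delta> H"
proof -
  have "(t, Vis h, dec t') \<in> cfm_trans \<Delta>"
    using assms(5) unfolding cfm_trans_def by blast
  with branching_bisimulationD(4)[OF branching_bisimulation_bisimilarity assms(3)]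
  have "bb_answer Tau (cfm_trans \<Delta>) ((cfm_bisim \<Delta>)\<inverse>) t s (Vis h) (dec t')"
    by (rule bb_clauseD)
  then show ?thesis
  proof (cases rule: bb_answerE)
    case (empty s0)
    have "s0 \<in> net_places \<Delta> p"
      using tau_star_closed_subnet[OF empty(1) closed_subnet_net] assms(2) by simp
    with DNI_place_step[OF assms(1) _ assms(4) empty(2)] show ?thesis by simp
  next
    case (single s0 s1 a)
    have "s0 \<in> net_places \<Delta> p"
      using tau_star_closed_subnet[OF single(1) closed_subnet_net] assms(2) by simp
    with DNI_place_step[OF assms(1) _ assms(4) single(2)]
    have "(Restr s0, Restr s1) \<in> restr_bisim \<Delta> H" by simp
    moreover have "(t, s0) \<in> cfm_bisim \<Delta>"
      using single(3) by (auto intro: symD[OF sym_branching_bisimilarity])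
    then have "(Restr t, Restr s0) \<in> restr_bisim \<Delta> H"
      by (rule branching_bisimilarity_restr)
    moreover have "(Restr s1, Restr a) \<in> restr_bisim \<Delta> H"
      using single(5) by (auto intro: branching_bisimilarity_restr)
    ultimately show ?thesis
      using single(4) trans_branching_bisimilarity by (meson transD)
  qed simp
qed

theorem corollary4p2:
  fixes \<Delta> :: "'c::finite \<Rightarrow> ('a::finite, 'c) cfm"
    and H :: "'a set"
    and p q :: "('a, 'c) cfm"
  assumes "cfm_process \<Delta> p"
    and "cfm_process \<Delta> q"
    and "proc_team_equiv \<Delta> p q"
    and "DNI \<Delta> H p"
  shows "DNI \<Delta> H q"
proof -
  have cover: "\<exists>s\<in>net_places \<Delta> p. (s, t) \<in> cfm_bisim \<Delta>" if "t \<in> net_places \<Delta> q" for t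
    using assms(3) that by (simp add: proc_team_equiv_iff net_places_bisim_cover)
  show ?thesis
  proof (rule DNI_if_place_steps)
    fix t
    assume "t \<in> net_places \<Delta> q"
    then obtain s where "(s, t) \<in> cfm_bisim \<Delta>"
      using cover by blast
    \<comment> \<open>not automatic: a place with a forking transition is not bisimilar to itself\<close>
    then have "(t, t) \<in> cfm_bisim \<Delta>"
      using sym_branching_bisimilarity trans_branching_bisimilarity by (meson symD transD)
    then show "(Restr t, Restr t) \<in> restr_bisim \<Delta> H"
      by (rule branching_bisimilarity_restr)
  next
    fix t h t'
    assume "t \<in> net_places \<Delta> q" "h \<in> H" "step \<Delta> t (Vis h) t'"
    then show "\<exists>a. dec t' = {#a#} \<and> (Restr t, Restr a) \<in> restr_bisim \<Delta> H"
      using cover DNI_place_step_transfer[OF assms(4)] by blast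
  qed
qed

end
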